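(* (Absolute concentration robustness of OmpR-P.) For the EnvZ/OmpR network described in the context and any positive values of $k_1,\dots,k_{15}$, at every steady state with $[\mathrm{EnvZ\text{-}ATP}]\neq0$ (in particular at every positive steady state) one has \[[\mathrm{OmpR\text{-}P}]=\frac{k_1k_3k_5(k_{11}+k_{12})(k_{14}+k_{15})}{k_1k_3k_{10}k_{12}(k_{14}+k_{15})+k_2k_{13}k_{15}(k_4+k_5)(k_{11}+k_{12})}.\] In particular this value depends only on the rate constants and not on the initial conditions or total amounts of EnvZ and OmpR.
   Context: The EnvZ/OmpR network has mass-action kinetics and reactions $\mathrm{EnvZ\text{-}ADP}\underset{k_2}{\overset{k_1}{\rightleftharpoons}}\mathrm{EnvZ}\underset{k_4}{\overset{k_3}{\rightleftharpoons}}\mathrm{EnvZ\text{-}ATP}\xrightarrow{k_5}\mathrm{EnvZ\text{-}P}$; $\mathrm{EnvZ\text{-}P}+\mathrm{OmpR}\underset{k_7}{\overset{k_6}{\rightleftharpoons}}\mathrm{EnvZ\text{-}P\text{-}OmpR}\underset{k_9}{\overset{k_8}{\rightleftharpoons}}\mathrm{EnvZ}+\mathrm{OmpR\text{-}P}$; $\mathrm{EnvZ\text{-}ATP}+\mathrm{OmpR\text{-}P}\underset{k_{11}}{\overset{k_{10}}{\rightleftharpoons}}\mathrm{EnvZ\text{-}ATP\text{-}OmpR\text{-}P}\xrightarrow{k_{12}}\mathrm{EnvZ\text{-}ATP}+\mathrm{OmpR}$; $\mathrm{EnvZ\text{-}ADP}+\mathrm{OmpR\text{-}P}\underset{k_{14}}{\overset{k_{13}}{\rightleftharpoons}}\mathrm{EnvZ\text{-}ADP\text{-}OmpR\text{-}P}\xrightarrow{k_{15}}\mathrm{EnvZ\text{-}ADP}+\mathrm{OmpR}$.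 Here each name denotes a chemical species (hyphenated names are single species, i.e. bound forms), square brackets denote concentrations, and a steady state is a nonnegative concentration vector at which all mass-action rates of change vanish. *)

theory Defs
  imports Complex_Main
begin

text \<open>Species of the EnvZ/OmpR network.
  XD = EnvZ-ADP, X = EnvZ, XT = EnvZ-ATP, XP = EnvZ-P, Y = OmpR,
  XPY = EnvZ-P-OmpR, YP = OmpR-P, XTYP = EnvZ-ATP-OmpR-P, XDYP = EnvZ-ADP-OmpR-P.\<close>
datatype species = XD | X | XT | XP | Y | XPY | YP | XTYP | XDYP

fun envz_ompr_rhs :: "(nat \<Rightarrow> real) \<Rightarrow> (species \<Rightarrow> real) \<Rightarrow> species \<Rightarrow> real" where
  "envz_ompr_rhs k c XD =
     - k 1 * c XD + k 2 * c X - k 13 * c XD * c YP + k 14 * c XDYP + k 15 * c XDYP"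
| "envz_ompr_rhs k c X =
     k 1 * c XD - k 2 * c X - k 3 * c X + k 4 * c XT + k 8 * c XPY - k 9 * c X * c YP"
| "envz_ompr_rhs k c XT =
     k 3 * c X - k 4 * c XT - k 5 * c XT - k 10 * c XT * c YP + k 11 * c XTYP + k 12 * c XTYP"
| "envz_ompr_rhs k c XP =
     k 5 * c XT - k 6 * c XP * c Y + k 7 * c XPY"
| "envz_ompr_rhs k c Y =
     - k 6 * c XP * c Y + k 7 * c XPY + k 12 * c XTYP + k 15 * c XDYP"
| "envz_ompr_rhs k c XPY =
     k 6 * c XP * c Y - k 7 * c XPY - k 8 * c XPY + k 9 * c X * c YP"
| "envz_ompr_rhs k c YP =
     k 8 * c XPY - k 9 * c X * c YP - k 10 * c XT * c YP + k 11 * c XTYP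
     - k 13 * c XD * c YP + k 14 * c XDYP"
| "envz_ompr_rhs k c XTYP =
     k 10 * c XT * c YP - k 11 * c XTYP - k 12 * c XTYP"
| "envz_ompr_rhs k c XDYP =
     k 13 * c XD * c YP - k 14 * c XDYP - k 15 * c XDYP"

definition is_steady_state :: "(nat \<Rightarrow> real) \<Rightarrow> (species \<Rightarrow> real) \<Rightarrow> bool" where
  "is_steady_state k c \<longleftrightarrow> (\<forall>s. 0 \<le> c s) \<and> (\<forall>s. envz_ompr_rhs k c s = 0)"

end

theory Submission
  imports Defs
begin

(* The steady-state equations contain five simple relations: the complex
   balances for EnvZ-ATP-OmpR-P and EnvZ-ADP-OmpR-P, the conservation of the
   phosphate flux through EnvZ-P (obtained by adding the rates of EnvZ-P and
   OmpR), and the two linear balances EnvZ-ADP <-> EnvZ <-> EnvZ-ATP.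
   Eliminating EnvZ-ATP-OmpR-P, EnvZ-ADP-OmpR-P, EnvZ-ADP and EnvZ from these
   relations leaves a single identity  [EnvZ-ATP] * (N - [OmpR-P] * D) = 0,
   where N and D are the numerator and denominator of the claimed value. *)

definition ompr_p_numerator :: "(nat \<Rightarrow> real) \<Rightarrow> real" where
  "ompr_p_numerator k = k 1 * k 3 * k 5 * (k 11 + k 12) * (k 14 + k 15)"

definition ompr_p_denominator :: "(nat \<Rightarrow> real) \<Rightarrow> real" where
  "ompr_p_denominator k =
     k 1 * k 3 * k 10 * k 12 * (k 14 + k 15) + k 2 * k 13 * k 15 * (k 4 + k 5) * (k 11 + k 12)"

text \<open>The third one comes from the sum of the EnvZ-P and OmpR
  equations; the last two use the complex balances to simplify the EnvZ-ADP and
  EnvZ-ATP equations.\<close>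
lemma steady_state_relations:
  assumes rates_zero: "\<And>s. envz_ompr_rhs k c s = 0"
  shows xtyp_balance: "k 10 * c XT * c YP = (k 11 + k 12) * c XTYP"
    and xdyp_balance: "k 13 * c XD * c YP = (k 14 + k 15) * c XDYP"
    and phosphate_flux: "k 5 * c XT = k 12 * c XTYP + k 15 * c XDYP"
    and adp_balance: "k 1 * c XD = k 2 * c X"
    and atp_balance: "k 3 * c X = (k 4 + k 5) * c XT"
proof -
  show xtyp: "k 10 * c XT * c YP = (k 11 + k 12) * c XTYP"
    using rates_zero[of XTYP] by (simp add: ring_distribs; linarith)
  show xdyp: "k 13 * c XD * c YP = (k 14 + k 15) * c XDYP"
    using rates_zero[of XDYP] by (simp add: ring_distribs; linarith)
  show "k 5 * c XT = k 12 * c XTYP + k 15 * c XDYP"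
    using rates_zero[of XP] rates_zero[of Y] by simp
  show "k 1 * c XD = k 2 * c X"
    using rates_zero[of XD] xdyp by (simp add: ring_distribs; linarith)
  show "k 3 * c X = (k 4 + k 5) * c XT"
    using rates_zero[of XT] xtyp by (simp add: ring_distribs; linarith)
qed

text \<open>Multiplying the phosphate-flux
  relation by (k11+k12)(k14+k15) k1 k3 and substituting the other four relations
  turns every term into a multiple of [EnvZ-ATP].\<close>
lemma ompr_p_elimination:
  assumes rates_zero: "\<And>s. envz_ompr_rhs k c s = 0"
  shows "c XT * ompr_p_numerator k = c XT * (c YP * ompr_p_denominator k)"
proof -
  note xtyp = xtyp_balance[OF rates_zero] and xdyp = xdyp_balance[OF rates_zero]
    and flux = phosphate_flux[OF rates_zero]
    and adp = adp_balance[OF rates_zero] and atp = atp_balance[OF rates_zero]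
  define A where "A = k 11 + k 12"
  define B where "B = k 14 + k 15"
  have "c XT * ompr_p_numerator k = k 5 * c XT * (A * B * k 1 * k 3)"
    unfolding ompr_p_numerator_def A_def B_def by (simp add: algebra_simps)
  also have "\<dots> = (k 12 * c XTYP + k 15 * c XDYP) * (A * B * k 1 * k 3)"
    by (simp only: flux)
  also have "\<dots> = k 12 * B * k 1 * k 3 * (A * c XTYP) + k 15 * A * k 3 * k 1 * (B * c XDYP)"
    by (simp add: algebra_simps)
  also have "\<dots> = k 12 * B * k 1 * k 3 * (k 10 * c XT * c YP)
                 + k 15 * A * k 3 * (k 13 * c YP) * (k 1 * c XD)"
    unfolding A_def B_def xtyp[symmetric] xdyp[symmetric] by (simp add: algebra_simps)
  also have "\<dots> = k 12 * B * k 1 * k 3 * (k 10 * c XT * c YP)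
                 + k 15 * A * (k 13 * c YP) * k 2 * (k 3 * c X)"
    using adp by (simp add: algebra_simps)
  also have "\<dots> = c XT * (c YP * ompr_p_denominator k)"
    using atp unfolding ompr_p_denominator_def A_def B_def by (simp add: algebra_simps)
  finally show ?thesis .
qed

lemma ompr_p_denominator_pos:
  assumes "\<And>i. 1 \<le> i \<Longrightarrow> i \<le> 15 \<Longrightarrow> 0 < k i"
  shows "0 < ompr_p_denominator k"
proof -
  have pos: "0 < k i" if "i \<in> {1,2,3,4,5,10,11,12,13,14,15}" for i
    using assms that by auto
  show ?thesis
    unfolding ompr_p_denominator_def
    by (intro add_pos_pos mult_pos_pos) (simp_all add: pos)
qed

theorem mainTheorem6:
  fixes k :: "nat \<Rightarrow> real" and c :: "species \<Rightarrow> real"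
  assumes "\<And>i. 1 \<le> i \<Longrightarrow> i \<le> 15 \<Longrightarrow> 0 < k i"
    and "is_steady_state k c"
    and "c XT \<noteq> 0"
  shows "c YP = k 1 * k 3 * k 5 * (k 11 + k 12) * (k 14 + k 15) /
          (k 1 * k 3 * k 10 * k 12 * (k 14 + k 15) + k 2 * k 13 * k 15 * (k 4 + k 5) * (k 11 + k 12))"
proof -
  have "\<And>s. envz_ompr_rhs k c s = 0"
    using assms(2) unfolding is_steady_state_def by blast
  then have "c XT * ompr_p_numerator k = c XT * (c YP * ompr_p_denominator k)"
    by (rule ompr_p_elimination)
  then have "ompr_p_numerator k = c YP * ompr_p_denominator k"
    using assms(3) by simp
  moreover have "0 < ompr_p_denominator k"
    using ompr_p_denominator_pos assms(1) by blast
  ultimately have "c YP = ompr_p_numerator k / ompr_p_denominator k"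
    by (simp add: field_simps)
  then show ?thesis
    unfolding ompr_p_numerator_def ompr_p_denominator_def .
qed

end
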